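(* On $\mathbb{R}^3$ with coordinates $(x,y,z)$ (the Heisenberg group $H_3$), let $\theta^1 = x\,dy + dz$, $\theta^2 = dy$, $\theta^3 = dx$. For arbitrary positive constants $A,B,C$, consider the left-invariant Lorentzian metric $$g = A\,(\theta^1)^2 + B\,(\theta^2)^2 - C\,(\theta^3)^2 .$$ Then there exist a smooth vector field $X$ on $\mathbb{R}^3$ and a constant $\alpha<0$ such that $$2\,\mathrm{Ric}[g] + L_X g + \alpha\, g = 0 .$$ That is, every such metric is a shrinking Lorentzian Ricci soliton.
   Context: $L_X$ denotes the Lie derivative along $X$. A Ricci soliton with $\alpha<0$ in the equation $2\,\mathrm{Ric}[g] + L_X g + \alpha g = 0$ is called shrinking. *)

theory Defs
  imports "HOL-Analysis.Analysis"
begin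

text \<open>Coordinate calculus on R^3 = real^3; coordinates (x,y,z) are components 1,2,3.\<close>

type_synonym pt = "real^3"

definition partial :: "3 \<Rightarrow> (pt \<Rightarrow> real) \<Rightarrow> pt \<Rightarrow> real" where
  "partial i f p = deriv (\<lambda>t. f (p + t *\<^sub>R axis i 1)) 0"

fun iter_partial :: "3 list \<Rightarrow> (pt \<Rightarrow> real) \<Rightarrow> pt \<Rightarrow> real" where
  "iter_partial [] f = f"
| "iter_partial (i # is) f = partial i (iter_partial is f)"

definition smooth_fun :: "(pt \<Rightarrow> real) \<Rightarrow> bool" where
  "smooth_fun f \<longleftrightarrow> (\<forall>is p. iter_partial is f differentiable (at p))"

definition smooth_vf :: "(pt \<Rightarrow> real^3) \<Rightarrow> bool" where
  "smooth_vf X \<longleftrightarrow> (\<forall>k. smooth_fun (\<lambda>p. X p $ k))"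

text \<open>Symmetric 2-tensor fields given by components in the coordinate frame.\<close>
type_synonym tensor2 = "pt \<Rightarrow> real^3^3"

definition inv_metric :: "tensor2 \<Rightarrow> tensor2" where
  "inv_metric g p = matrix_inv (g p)"

definition christoffel :: "tensor2 \<Rightarrow> 3 \<Rightarrow> 3 \<Rightarrow> 3 \<Rightarrow> pt \<Rightarrow> real" where
  "christoffel g k i j p = (1/2) * (\<Sum>l\<in>UNIV. inv_metric g p $ k $ l *
      (partial i (\<lambda>q. g q $ j $ l) p + partial j (\<lambda>q. g q $ i $ l) p
       - partial l (\<lambda>q. g q $ i $ j) p))"

definition ricci :: "tensor2 \<Rightarrow> tensor2" where
  "ricci g p = (\<chi> i j. (\<Sum>k\<in>UNIV.
      partial k (christoffel g k i j) p - partial j (christoffel g k i k) p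
      + (\<Sum>l\<in>UNIV. christoffel g k k l p * christoffel g l i j p
                   - christoffel g k j l p * christoffel g l i k p)))"

definition lie_deriv :: "(pt \<Rightarrow> real^3) \<Rightarrow> tensor2 \<Rightarrow> tensor2" where
  "lie_deriv X g p = (\<chi> i j. (\<Sum>k\<in>UNIV.
      X p $ k * partial k (\<lambda>q. g q $ i $ j) p
      + g p $ k $ j * partial i (\<lambda>q. X q $ k) p
      + g p $ i $ k * partial j (\<lambda>q. X q $ k) p))"

text \<open>The metric g = A (x dy + dz)^2 + B dy^2 - C dx^2 on H_3 in coordinates (x,y,z).\<close>
definition heis_metric :: "real \<Rightarrow> real \<Rightarrow> real \<Rightarrow> tensor2" where
  "heis_metric A B C p = (let x = p $ 1 in
     vector [vector [- C, 0, 0],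
             vector [0, A * x\<^sup>2 + B, A * x],
             vector [0, A * x, A]])"

end

theory Submission
  imports Defs
begin

(* The metric g = A (x dy + dz)^2 + B dy^2 - C dx^2 has coordinate
   components depending on the first coordinate x alone, and so do its inverse,
   its Christoffel symbols and its Ricci tensor.  With k = A/(B C) the Ricci
   tensor is
       Ric = -(A/2B) dx^2 + (A/2C) dy^2 - (A^2/2BC) (x dy + dz)^2 ,
   and the linear field X = k (x d/dx + y d/dy + 2 z d/dz) satisfies
       L_X g = k x dg/dx + (c_i + c_j) g_ij     with c = (k, k, 2k),
   so 2 Ric + L_X g - 3k g = 0: a shrinking soliton with alpha = -3k < 0. *)

lemma matrix_inv_unique:
  fixes M :: "'a::semiring_1^'n^'m" and N :: "'a^'m^'n"
  assumes "M ** N = mat 1" and "N ** M = mat 1"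
  shows "matrix_inv M = N"
proof -
  have "\<exists>N'. M ** N' = mat 1 \<and> N' ** M = mat 1" using assms by blast
  then have inv: "M ** matrix_inv M = mat 1 \<and> matrix_inv M ** M = mat 1"
    unfolding matrix_inv_def by (rule someI_ex)
  have "matrix_inv M = matrix_inv M ** (M ** N)" using assms by (simp add: matrix_mul_rid)
  also have "\<dots> = (matrix_inv M ** M) ** N" by (simp add: matrix_mul_assoc)
  also have "\<dots> = N" using inv by (simp add: matrix_mul_lid)
  finally show ?thesis .
qed

lemma partial_fun_of_x:
  assumes "\<And>x. (h has_real_derivative h' x) (at x)"
  shows "partial i (\<lambda>q. h (q$1)) p = (if i = 1 then h' (p$1) else 0)"
proof -
  let ?e = "if i = 1 then 1 else 0 :: real"
  have line: "(\<lambda>t. h ((p + t *\<^sub>R axis i 1) $ 1)) = (\<lambda>t. h (p$1 + t * ?e))"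
    by (auto simp: axis_def)
  have "((\<lambda>t. h (p$1 + t * ?e)) has_real_derivative h' (p$1 + 0 * ?e) * ?e) (at 0)"
    by (rule DERIV_chain2[OF assms]) (auto intro!: derivative_eq_intros)
  then show ?thesis unfolding partial_def line by (auto dest!: DERIV_imp_deriv)
qed

lemma partial_affine:
  "partial i (\<lambda>q. a + c * q$j) p = (if i = j then c else 0)"
proof -
  have line: "(\<lambda>t. a + c * (p + t *\<^sub>R axis i 1) $ j)
            = (\<lambda>t. a + c * p$j + t * (if i = j then c else 0))"
    by (auto simp: axis_def algebra_simps)
  have "((\<lambda>t. a + c * p$j + t * (if i = j then c else 0)) has_real_derivative
          (if i = j then c else 0)) (at 0)"
    by (auto intro!: derivative_eq_intros)
  then show ?thesis unfolding partial_def line by (auto dest!: DERIV_imp_deriv)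
qed

text \<open>Affine functions of one coordinate are closed under partial differentiation,
  hence smooth; so are linear vector fields with diagonal coefficients.\<close>

lemma iter_partial_affine:
  "\<exists>a' c'. iter_partial ds (\<lambda>q. a + c * q$j) = (\<lambda>q. a' + c' * q$j)"
proof (induction ds)
  case Nil
  show ?case by auto
next
  case (Cons i ds)
  then obtain a' c' where ds: "iter_partial ds (\<lambda>q. a + c * q$j) = (\<lambda>q. a' + c' * q$j)"
    by blast
  have "iter_partial (i # ds) (\<lambda>q. a + c * q$j) = (\<lambda>q. (if i = j then c' else 0) + 0 * q$j)"
    by (simp add: ds fun_eq_iff partial_affine)
  then show ?case by blast
qed

lemma smooth_affine: "smooth_fun (\<lambda>q. a + c * q$j)"
  unfolding smooth_fun_def
proof (intro allI)
  fix ds p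
  obtain a' c' where ds: "iter_partial ds (\<lambda>q. a + c * q$j) = (\<lambda>q. a' + c' * q$j)"
    using iter_partial_affine by blast
  have "(\<lambda>q::pt. q$j) differentiable (at p)"
    using bounded_linear_vec_nth bounded_linear_imp_differentiable by blast
  then show "iter_partial ds (\<lambda>q. a + c * q$j) differentiable (at p)"
    unfolding ds by (intro differentiable_add differentiable_mult differentiable_const)
qed

definition linear_field :: "(3 \<Rightarrow> real) \<Rightarrow> pt \<Rightarrow> real^3" where
  "linear_field c q = (\<chi> m. c m * q$m)"

lemma linear_field_component: "(\<lambda>q. linear_field c q $ m) = (\<lambda>q. 0 + c m * q$m)"
  by (simp add: linear_field_def)

lemma smooth_linear_field: "smooth_vf (linear_field c)"
  unfolding smooth_vf_def linear_field_component by (intro allI smooth_affine)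

lemma lie_deriv_linear_field:
  assumes comp: "\<And>q i j. g q $ i $ j = gc i j (q$1)"
    and deriv: "\<And>i j x. (gc i j has_real_derivative gc' i j x) (at x)"
  shows "lie_deriv (linear_field c) g p $ i $ j
           = c 1 * p$1 * gc' i j (p$1) + (c i + c j) * gc i j (p$1)"
proof -
  have dg: "partial k (\<lambda>q. g q $ i $ j) p = (if k = 1 then gc' i j (p$1) else 0)" for k i j
    unfolding comp by (rule partial_fun_of_x[OF deriv])
  have dX: "partial i (\<lambda>q. linear_field c q $ k) p = (if i = k then c k else 0)" for i k
    unfolding linear_field_component partial_affine ..
  have summand: "linear_field c p $ k * partial k (\<lambda>q. g q $ i $ j) p
        + g p $ k $ j * partial i (\<lambda>q. linear_field c q $ k) p
        + g p $ i $ k * partial j (\<lambda>q. linear_field c q $ k) p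
      = (if k = 1 then c 1 * p$1 * gc' i j (p$1) else 0)
        + (if k = i then c i * gc i j (p$1) else 0)
        + (if k = j then c j * gc i j (p$1) else 0)" for k
    unfolding dg dX by (auto simp: comp linear_field_def)
  show ?thesis
    unfolding lie_deriv_def vec_lambda_beta summand
    by (simp add: sum.distrib algebra_simps)
qed

text \<open>A small device for differentiating the piecewise-by-index component tables
  below: the case split is on indices, not on the variable.\<close>

lemma DERIV_if_index:
  "(f has_real_derivative f') F \<Longrightarrow> (g has_real_derivative g') F \<Longrightarrow>
   ((\<lambda>x. if P then f x else g x) has_real_derivative (if P then f' else g')) F"
  by (cases P) auto

lemma DERIV_linear: "((\<lambda>x. a * x) has_real_derivative a) (at x)"
  by (rule derivative_eq_intros refl | simp)+

lemma DERIV_quadratic: "((\<lambda>x. a * x\<^sup>2 + b) has_real_derivative 2 * a * x) (at x)"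
  by (rule derivative_eq_intros refl | simp)+

definition heis_comp :: "real \<Rightarrow> real \<Rightarrow> real \<Rightarrow> 3 \<Rightarrow> 3 \<Rightarrow> real \<Rightarrow> real" where
  "heis_comp A B C i j x =
    (if i = 1 \<and> j = 1 then -C
     else if i = 2 \<and> j = 2 then A * x\<^sup>2 + B
     else if (i = 2 \<and> j = 3) \<or> (i = 3 \<and> j = 2) then A * x
     else if i = 3 \<and> j = 3 then A
     else 0)"

definition heis_comp' :: "real \<Rightarrow> 3 \<Rightarrow> 3 \<Rightarrow> real \<Rightarrow> real" where
  "heis_comp' A i j x =
    (if i = 1 \<and> j = 1 then 0
     else if i = 2 \<and> j = 2 then 2 * A * x
     else if (i = 2 \<and> j = 3) \<or> (i = 3 \<and> j = 2) then A
     else if i = 3 \<and> j = 3 then 0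
     else 0)"

lemma heis_metric_comp: "heis_metric A B C q $ i $ j = heis_comp A B C i j (q$1)"
  using exhaust_3[of i] exhaust_3[of j]
  by (auto simp: heis_metric_def heis_comp_def Let_def)

lemma heis_comp_deriv: "(heis_comp A B C i j has_real_derivative heis_comp' A i j x) (at x)"
  unfolding heis_comp_def[abs_def] heis_comp'_def
  by (rule DERIV_if_index DERIV_linear DERIV_quadratic DERIV_const)+

lemma partial_heis_metric:
  "partial l (\<lambda>q. heis_metric A B C q $ i $ j) p = (if l = 1 then heis_comp' A i j (p$1) else 0)"
  unfolding heis_metric_comp by (rule partial_fun_of_x[OF heis_comp_deriv])

definition heis_inv :: "real \<Rightarrow> real \<Rightarrow> real \<Rightarrow> real \<Rightarrow> real^3^3" where
  "heis_inv A B C x = vector [vector [-1/C, 0, 0],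
                              vector [0, 1/B, -x/B],
                              vector [0, -x/B, x\<^sup>2/B + 1/A]]"

lemma inv_metric_heis:
  assumes "A > 0" "B > 0" "C > 0"
  shows "inv_metric (heis_metric A B C) p = heis_inv A B C (p$1)"
proof -
  have "heis_metric A B C p ** heis_inv A B C (p$1) = mat 1"
    and "heis_inv A B C (p$1) ** heis_metric A B C p = mat 1"
    unfolding heis_metric_def Let_def heis_inv_def matrix_matrix_mult_def vec_eq_iff
      forall_3 sum_3
    using assms by (simp_all add: mat_def field_simps power2_eq_square)
  then show ?thesis unfolding inv_metric_def by (rule matrix_inv_unique)
qed

definition heis_chr :: "real \<Rightarrow> real \<Rightarrow> real \<Rightarrow> 3 \<Rightarrow> 3 \<Rightarrow> 3 \<Rightarrow> real \<Rightarrow> real" where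
  "heis_chr A B C k i j x =
    (if k = 1 \<and> i = 2 \<and> j = 2 then (A/C) * x
     else if k = 1 \<and> ((i = 2 \<and> j = 3) \<or> (i = 3 \<and> j = 2)) then A/(2*C)
     else if k = 2 \<and> ((i = 1 \<and> j = 2) \<or> (i = 2 \<and> j = 1)) then (A/(2*B)) * x
     else if k = 3 \<and> ((i = 1 \<and> j = 2) \<or> (i = 2 \<and> j = 1)) then (-(A/(2*B))) * x\<^sup>2 + 1/2
     else if k = 2 \<and> ((i = 1 \<and> j = 3) \<or> (i = 3 \<and> j = 1)) then A/(2*B)
     else if k = 3 \<and> ((i = 1 \<and> j = 3) \<or> (i = 3 \<and> j = 1)) then (-(A/(2*B))) * x
     else 0)"

definition heis_chr' :: "real \<Rightarrow> real \<Rightarrow> real \<Rightarrow> 3 \<Rightarrow> 3 \<Rightarrow> 3 \<Rightarrow> real \<Rightarrow> real" where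
  "heis_chr' A B C k i j x =
    (if k = 1 \<and> i = 2 \<and> j = 2 then A/C
     else if k = 1 \<and> ((i = 2 \<and> j = 3) \<or> (i = 3 \<and> j = 2)) then 0
     else if k = 2 \<and> ((i = 1 \<and> j = 2) \<or> (i = 2 \<and> j = 1)) then A/(2*B)
     else if k = 3 \<and> ((i = 1 \<and> j = 2) \<or> (i = 2 \<and> j = 1)) then 2 * (-(A/(2*B))) * x
     else if k = 2 \<and> ((i = 1 \<and> j = 3) \<or> (i = 3 \<and> j = 1)) then 0
     else if k = 3 \<and> ((i = 1 \<and> j = 3) \<or> (i = 3 \<and> j = 1)) then -(A/(2*B))
     else 0)"

lemma heis_chr_deriv: "(heis_chr A B C k i j has_real_derivative heis_chr' A B C k i j x) (at x)"
  unfolding heis_chr_def[abs_def] heis_chr'_def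
  by (rule DERIV_if_index DERIV_linear DERIV_quadratic DERIV_const)+

lemma christoffel_heis:
  assumes "A > 0" "B > 0" "C > 0"
  shows "christoffel (heis_metric A B C) k i j = (\<lambda>q. heis_chr A B C k i j (q$1))"
proof
  fix q
  have "\<forall>k i j. christoffel (heis_metric A B C) k i j q = heis_chr A B C k i j (q$1)"
    unfolding christoffel_def inv_metric_heis[OF assms] partial_heis_metric sum_3 forall_3
    using assms by (simp add: heis_inv_def heis_chr_def heis_comp'_def field_simps power2_eq_square)
  then show "christoffel (heis_metric A B C) k i j q = heis_chr A B C k i j (q$1)" by blast
qed

definition heis_ric :: "real \<Rightarrow> real \<Rightarrow> real \<Rightarrow> 3 \<Rightarrow> 3 \<Rightarrow> real \<Rightarrow> real" where
  "heis_ric A B C i j x =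
    (if i = 1 \<and> j = 1 then -(A/(2*B))
     else if i = 2 \<and> j = 2 then A/(2*C) - A\<^sup>2 * x\<^sup>2/(2*B*C)
     else if (i = 2 \<and> j = 3) \<or> (i = 3 \<and> j = 2) then -(A\<^sup>2 * x/(2*B*C))
     else if i = 3 \<and> j = 3 then -(A\<^sup>2/(2*B*C))
     else 0)"

lemma ricci_heis:
  assumes "A > 0" "B > 0" "C > 0"
  shows "ricci (heis_metric A B C) p $ i $ j = heis_ric A B C i j (p$1)"
proof -
  have chr: "christoffel (heis_metric A B C) k i j p = heis_chr A B C k i j (p$1)" for k i j
    unfolding christoffel_heis[OF assms] ..
  have dchr: "partial l (christoffel (heis_metric A B C) k i j) p
                = (if l = 1 then heis_chr' A B C k i j (p$1) else 0)" for l k i j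
    unfolding christoffel_heis[OF assms] by (rule partial_fun_of_x[OF heis_chr_deriv])
  have "\<forall>i j. ricci (heis_metric A B C) p $ i $ j = heis_ric A B C i j (p$1)"
    unfolding ricci_def vec_lambda_beta dchr chr sum_3 forall_3
    using assms by (simp add: heis_chr_def heis_chr'_def heis_ric_def field_simps power2_eq_square)
  then show ?thesis by blast
qed

definition soliton_coeff :: "real \<Rightarrow> 3 \<Rightarrow> real" where
  "soliton_coeff k m = (if m = 3 then 2 * k else k)"

lemma lie_deriv_heis:
  "lie_deriv (linear_field (soliton_coeff k)) (heis_metric A B C) p $ i $ j
     = k * p$1 * heis_comp' A i j (p$1)
       + (soliton_coeff k i + soliton_coeff k j) * heis_comp A B C i j (p$1)"
  using lie_deriv_linear_field[OF heis_metric_comp heis_comp_deriv]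
  by (simp add: soliton_coeff_def)

lemma heis_soliton_components:
  assumes "B > 0" "C > 0" and k: "k = A / (B * C)"
  shows "2 * heis_ric A B C i j x
           + (k * x * heis_comp' A i j x
              + (soliton_coeff k i + soliton_coeff k j) * heis_comp A B C i j x)
           + (- 3 * k) * heis_comp A B C i j x = 0"
proof -
  have "\<forall>i j. 2 * heis_ric A B C i j x
           + (k * x * heis_comp' A i j x
              + (soliton_coeff k i + soliton_coeff k j) * heis_comp A B C i j x)
           + (- 3 * k) * heis_comp A B C i j x = 0"
    unfolding forall_3 using assms
    by (simp add: heis_ric_def heis_comp_def heis_comp'_def soliton_coeff_def
        field_simps power2_eq_square)
  then show ?thesis by blast
qed

theorem mainTheorem2:
  fixes A B C :: real
  assumes "A > 0" and "B > 0" and "C > 0"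
  shows "\<exists>(X :: real^3 \<Rightarrow> real^3) (\<alpha> :: real). smooth_vf X \<and> \<alpha> < 0 \<and>
           (\<forall>p. 2 *\<^sub>R ricci (heis_metric A B C) p + lie_deriv X (heis_metric A B C) p
                 + \<alpha> *\<^sub>R heis_metric A B C p = 0)"
proof (intro exI conjI allI)
  define k where "k = A / (B * C)"
  let ?X = "linear_field (soliton_coeff k)"
  show "smooth_vf ?X" by (rule smooth_linear_field)
  show "- 3 * k < 0" using assms by (simp add: k_def)
  fix p :: pt
  show "2 *\<^sub>R ricci (heis_metric A B C) p + lie_deriv ?X (heis_metric A B C) p
          + (- 3 * k) *\<^sub>R heis_metric A B C p = 0"
    using heis_soliton_components[OF assms(2,3) k_def]
    by (simp add: vec_eq_iff ricci_heis[OF assms] lie_deriv_heis heis_metric_comp)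
qed

end
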